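(* Let $G=(N,E,W)$ be a finite undirected graph with positive edge weights $W=\{w_e : e\in E\}$, let $x,y\in N$ with $xy\notin E$, and let $G^*=(N,E^*,W^* )$ with $E^*=E\cup\{xy\}$ and $W^*=W\cup\{w_{x,y}\}$ for some weight $w_{x,y}>0$. Let $d$ and $d^*$ be the hop distances of $G$ and $G^*$, let $\mu_a,\mu^*_a$ be the neighbor measures and $k,k^*$ the Ollivier-Ricci curvatures of $G$ and $G^*$ (defined in the context). Then for any nodes $a\neq b$ in $N$, $$k^*(a,b)-k(a,b)\le \frac{W_1^{d}(\mu_a,\mu_b)-W_1^{d^*}(\mu^*_a,\mu^*_b)}{d^*(a,b)}.$$ Moreover, if $a,b\notin\{x,y\}$ and there exists a coupling $\pi^*$ attaining the minimum in $W_1^{d^*}(\mu^*_a,\mu^*_b)$, then $$k^*(a,b)-k(a,b)\le \frac{\|d-d^*\|_{\infty,N}}{d^*(a,b)},\qquad\text{where }\ \|d-d^*\|_{\infty,N}=\max_{(u,v)\in N^2}|d(u,v)-d^*(u,v)|.$$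
   Context: The graph $G$ is assumed connected, so all hop distances are finite. The hop distance $d(u,v)$ in a graph is the minimum number of edges on a path from $u$ to $v$ (weights are ignored). For a node $a$, $N_a$ denotes its set of neighbors in $G$ and $N^*_a$ its set of neighbors in $G^*$. The neighbor measures are the probability measures on $N$ given by $\mu_a(v)=\frac{w_{a,v}}{\sum_{c\in N_a} w_{a,c}}$ for $v\in N_a$ (and $0$ otherwise), and $\mu^*_a(v)=\frac{w^*_{a,v}}{\sum_{c\in N^*_a} w^*_{a,c}}$ for $v\in N^*_a$ (and $0$ otherwise). For a metric $\delta$ on $N$ and probability measures $\mu,\nu$ on $N$, the Wasserstein distance is $W_1^{\delta}(\mu,\nu)=\inf_{\gamma}\sum_{i,j\in N}\delta(i,j)\gamma_{i,j}$, the infimum over couplings $\gamma$ (nonnegative matrices with row marginals $\mu$ and column marginals $\nu$). The Ollivier-Ricci curvature of a pair $a\neq b$ is $k(a,b)=1-\frac{W_1^{d}(\mu_a,\mu_b)}{d(a,b)}$ in $G$ and $k^*(a,b)=1-\frac{W_1^{d^*}(\mu^*_a,\mu^*_b)}{d^*(a,b)}$ in $G^*$. *)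

theory Defs
  imports Complex_Main
begin

definition wgraph :: "'a set \<Rightarrow> ('a \<times> 'a) set \<Rightarrow> ('a \<Rightarrow> 'a \<Rightarrow> real) \<Rightarrow> bool" where
  "wgraph N E w \<longleftrightarrow> finite N \<and> E \<subseteq> N \<times> N \<and> (\<forall>u v. (u,v) \<in> E \<longrightarrow> (v,u) \<in> E)
     \<and> (\<forall>u. (u,u) \<notin> E) \<and> (\<forall>u v. (u,v) \<in> E \<longrightarrow> w u v > 0 \<and> w u v = w v u)"

definition is_walk :: "('a \<times> 'a) set \<Rightarrow> 'a list \<Rightarrow> 'a \<Rightarrow> 'a \<Rightarrow> bool" where
  "is_walk E p u v \<longleftrightarrow> p \<noteq> [] \<and> hd p = u \<and> last p = v \<and>
     (\<forall>i. Suc i < length p \<longrightarrow> (p ! i, p ! Suc i) \<in> E)"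

definition connected_graph :: "'a set \<Rightarrow> ('a \<times> 'a) set \<Rightarrow> bool" where
  "connected_graph N E \<longleftrightarrow> (\<forall>u\<in>N. \<forall>v\<in>N. \<exists>p. is_walk E p u v)"

definition hop_dist :: "('a \<times> 'a) set \<Rightarrow> 'a \<Rightarrow> 'a \<Rightarrow> real" where
  "hop_dist E u v = real (LEAST n. \<exists>p. is_walk E p u v \<and> length p = Suc n)"

definition nbrs :: "('a \<times> 'a) set \<Rightarrow> 'a \<Rightarrow> 'a set" where
  "nbrs E a = {c. (a,c) \<in> E}"

definition nbr_measure :: "('a \<times> 'a) set \<Rightarrow> ('a \<Rightarrow> 'a \<Rightarrow> real) \<Rightarrow> 'a \<Rightarrow> 'a \<Rightarrow> real" where
  "nbr_measure E w a v = (if v \<in> nbrs E a then w a v / (\<Sum>c\<in>nbrs E a. w a c) else 0)"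

definition coupling :: "'a set \<Rightarrow> ('a \<Rightarrow> real) \<Rightarrow> ('a \<Rightarrow> real) \<Rightarrow> ('a \<Rightarrow> 'a \<Rightarrow> real) \<Rightarrow> bool" where
  "coupling N \<mu> \<nu> \<gamma> \<longleftrightarrow> (\<forall>i\<in>N. \<forall>j\<in>N. \<gamma> i j \<ge> 0)
     \<and> (\<forall>i\<in>N. (\<Sum>j\<in>N. \<gamma> i j) = \<mu> i) \<and> (\<forall>j\<in>N. (\<Sum>i\<in>N. \<gamma> i j) = \<nu> j)"

definition transport_cost :: "'a set \<Rightarrow> ('a \<Rightarrow> 'a \<Rightarrow> real) \<Rightarrow> ('a \<Rightarrow> 'a \<Rightarrow> real) \<Rightarrow> real" where
  "transport_cost N \<delta> \<gamma> = (\<Sum>i\<in>N. \<Sum>j\<in>N. \<delta> i j * \<gamma> i j)"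

definition wasserstein :: "'a set \<Rightarrow> ('a \<Rightarrow> 'a \<Rightarrow> real) \<Rightarrow> ('a \<Rightarrow> real) \<Rightarrow> ('a \<Rightarrow> real) \<Rightarrow> real" where
  "wasserstein N \<delta> \<mu> \<nu> = Inf {transport_cost N \<delta> \<gamma> | \<gamma>. coupling N \<mu> \<nu> \<gamma>}"

definition ricci :: "'a set \<Rightarrow> ('a \<times> 'a) set \<Rightarrow> ('a \<Rightarrow> 'a \<Rightarrow> real) \<Rightarrow> 'a \<Rightarrow> 'a \<Rightarrow> real" where
  "ricci N E w a b = 1 - wasserstein N (hop_dist E) (nbr_measure E w a) (nbr_measure E w b) / hop_dist E a b"

end

theory Submission
  imports Defs
begin

text \<open>Adding the edge xy only creates walks, so d* \<le> d; hence W/d \<le> W/d*, which gives the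
  first bound. If a and b are not endpoints of the new edge, their neighbour measures are
  unchanged, so an optimal coupling \<pi>* for G* is also a coupling for G, and
  W \<le> cost_d(\<pi>*) \<le> cost_d*(\<pi>*) + \<parallel>d - d*\<parallel> = W* + \<parallel>d - d*\<parallel>, since \<pi>* has total mass 1.\<close>

lemma is_walk_mono: "is_walk E p u v \<Longrightarrow> E \<subseteq> E' \<Longrightarrow> is_walk E' p u v"
  unfolding is_walk_def by blast

lemma hop_dist_nonneg: "0 \<le> hop_dist E u v"
  unfolding hop_dist_def by simp

lemma hop_dist_le_walk_length:
  assumes "is_walk E p u v"
  shows "hop_dist E u v \<le> real (length p - 1)"
proof -
  have "length p = Suc (length p - 1)" using assms unfolding is_walk_def by simp
  then have "(LEAST n. \<exists>q. is_walk E q u v \<and> length q = Suc n) \<le> length p - 1"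
    using assms by (intro Least_le) blast
  then show ?thesis unfolding hop_dist_def by simp
qed

lemma shortest_walk_exists:
  assumes "is_walk E p u v"
  obtains q where "is_walk E q u v" "hop_dist E u v = real (length q - 1)"
proof -
  have "length p = Suc (length p - 1)" using assms unfolding is_walk_def by simp
  then have "\<exists>n q. is_walk E q u v \<and> length q = Suc n" using assms by blast
  from LeastI_ex[OF this] obtain q where
    "is_walk E q u v" "length q = Suc (LEAST n. \<exists>q. is_walk E q u v \<and> length q = Suc n)"
    by blast
  then show ?thesis using that unfolding hop_dist_def by simp
qed

lemma hop_dist_antimono:
  assumes "is_walk E p u v" "E \<subseteq> E'"
  shows "hop_dist E' u v \<le> hop_dist E u v"
proof -
  obtain q where "is_walk E q u v" "hop_dist E u v = real (length q - 1)"
    using shortest_walk_exists[OF assms(1)] .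
  then show ?thesis using hop_dist_le_walk_length is_walk_mono assms(2) by metis
qed

lemma walk_length_ge_2:
  assumes "is_walk E p u v" "u \<noteq> v"
  shows "2 \<le> length p"
proof (rule ccontr)
  assume "\<not> 2 \<le> length p"
  moreover have "p \<noteq> []" using assms(1) unfolding is_walk_def by simp
  ultimately obtain z where "p = [z]" by (cases p) (auto simp: Suc_le_eq)
  with assms show False unfolding is_walk_def by auto
qed

lemma hop_dist_ge_1:
  assumes "is_walk E p u v" "u \<noteq> v"
  shows "1 \<le> hop_dist E u v"
proof -
  obtain q where "is_walk E q u v" "hop_dist E u v = real (length q - 1)"
    using shortest_walk_exists[OF assms(1)] .
  then show ?thesis using walk_length_ge_2 assms(2) by fastforce
qed

lemma nbrs_nonempty_if_walk:
  assumes "is_walk E p u v" "u \<noteq> v"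
  shows "nbrs E u \<noteq> {}"
proof -
  have "Suc 0 < length p" using walk_length_ge_2[OF assms] by simp
  then have "(p ! 0, p ! Suc 0) \<in> E" using assms(1) unfolding is_walk_def by blast
  moreover have "p ! 0 = u" using assms(1) unfolding is_walk_def by (metis hd_conv_nth)
  ultimately show ?thesis unfolding nbrs_def by auto
qed

lemma
  assumes "wgraph N E w" "nbrs E a \<noteq> {}"
  shows nbr_measure_nonneg: "0 \<le> nbr_measure E w a v"
    and sum_nbr_measure: "(\<Sum>v\<in>N. nbr_measure E w a v) = 1"
proof -
  have sub: "nbrs E a \<subseteq> N" and pos: "\<And>c. c \<in> nbrs E a \<Longrightarrow> 0 < w a c"
    and fin: "finite N"
    using assms(1) unfolding wgraph_def nbrs_def by auto
  then have total: "0 < (\<Sum>c\<in>nbrs E a. w a c)"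
    using assms(2) by (intro sum_pos) (auto intro: finite_subset)
  then show "0 \<le> nbr_measure E w a v"
    unfolding nbr_measure_def using pos by (simp add: less_imp_le)
  have "(\<Sum>v\<in>N. nbr_measure E w a v) = (\<Sum>v\<in>nbrs E a. w a v / (\<Sum>c\<in>nbrs E a. w a c))"
    unfolding nbr_measure_def
    by (simp add: sum.inter_restrict[OF fin, symmetric] Int_absorb1[OF sub])
  also have "\<dots> = 1" using total by (simp add: sum_divide_distrib[symmetric])
  finally show "(\<Sum>v\<in>N. nbr_measure E w a v) = 1" .
qed

lemma nbr_measure_add_edge_non_endpoint:
  assumes "u \<notin> {x, y}"
  shows "nbr_measure (E \<union> {(x, y), (y, x)})
           (\<lambda>u v. if (u = x \<and> v = y) \<or> (u = y \<and> v = x) then wxy else w u v) u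
         = nbr_measure E w u"
proof -
  have "nbrs (E \<union> {(x, y), (y, x)}) u = nbrs E u" using assms unfolding nbrs_def by auto
  then show ?thesis using assms unfolding nbr_measure_def by auto
qed

lemma connected_nbrs_nonempty:
  assumes "connected_graph N E" "a \<in> N" "b \<in> N" "a \<noteq> b"
  shows "nbrs E a \<noteq> {}"
  using assms nbrs_nonempty_if_walk unfolding connected_graph_def by metis

lemma
  assumes "connected_graph N E" "E \<subseteq> E'" "a \<in> N" "b \<in> N" "a \<noteq> b"
  shows hop_dist_supergraph_pos: "0 < hop_dist E' a b"
    and hop_dist_supergraph_le: "hop_dist E' a b \<le> hop_dist E a b"
proof -
  obtain p where p: "is_walk E p a b" using assms(1,3,4) unfolding connected_graph_def by blast
  show "0 < hop_dist E' a b" using hop_dist_ge_1[OF is_walk_mono[OF p assms(2)] assms(5)] by simp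
  show "hop_dist E' a b \<le> hop_dist E a b" using hop_dist_antimono[OF p assms(2)] .
qed

lemma product_coupling:
  assumes "\<And>v. 0 \<le> \<mu> v" "(\<Sum>v\<in>N. \<mu> v) = 1" "\<And>v. 0 \<le> \<nu> v" "(\<Sum>v\<in>N. \<nu> v) = 1"
  shows "coupling N \<mu> \<nu> (\<lambda>i j. \<mu> i * \<nu> j)"
  unfolding coupling_def using assms
  by (simp add: sum_distrib_left[symmetric] sum_distrib_right[symmetric])

lemma transport_cost_nonneg:
  assumes "\<And>i j. 0 \<le> \<delta> i j" "coupling N \<mu> \<nu> \<gamma>"
  shows "0 \<le> transport_cost N \<delta> \<gamma>"
  using assms unfolding transport_cost_def coupling_def by (intro sum_nonneg) auto

lemma wasserstein_nonneg:
  assumes "\<And>i j. 0 \<le> \<delta> i j" "coupling N \<mu> \<nu> \<gamma>"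
  shows "0 \<le> wasserstein N \<delta> \<mu> \<nu>"
  unfolding wasserstein_def
  by (rule cInf_greatest) (use assms(2) in \<open>auto intro: transport_cost_nonneg[OF assms(1)]\<close>)

lemma wasserstein_le_transport_cost:
  assumes "\<And>i j. 0 \<le> \<delta> i j" "coupling N \<mu> \<nu> \<gamma>"
  shows "wasserstein N \<delta> \<mu> \<nu> \<le> transport_cost N \<delta> \<gamma>"
  unfolding wasserstein_def
proof (rule cInf_lower)
  show "bdd_below {transport_cost N \<delta> \<gamma> |\<gamma>. coupling N \<mu> \<nu> \<gamma>}"
    by (rule bdd_belowI[where m = 0]) (auto intro: transport_cost_nonneg[OF assms(1)])
qed (use assms in auto)

lemma transport_cost_diff_le:
  assumes "coupling N \<mu> \<nu> \<gamma>" "(\<Sum>i\<in>N. \<mu> i) = 1"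
    and "\<And>i j. i \<in> N \<Longrightarrow> j \<in> N \<Longrightarrow> \<delta> i j - \<delta>' i j \<le> M"
  shows "transport_cost N \<delta> \<gamma> - transport_cost N \<delta>' \<gamma> \<le> M"
proof -
  have nonneg: "\<And>i j. i \<in> N \<Longrightarrow> j \<in> N \<Longrightarrow> 0 \<le> \<gamma> i j"
    and rows: "\<And>i. i \<in> N \<Longrightarrow> (\<Sum>j\<in>N. \<gamma> i j) = \<mu> i"
    using assms(1) unfolding coupling_def by auto
  have "transport_cost N \<delta> \<gamma> - transport_cost N \<delta>' \<gamma>
      = (\<Sum>i\<in>N. \<Sum>j\<in>N. (\<delta> i j - \<delta>' i j) * \<gamma> i j)"
    unfolding transport_cost_def by (simp add: sum_subtractf[symmetric] left_diff_distrib)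
  also have "\<dots> \<le> (\<Sum>i\<in>N. \<Sum>j\<in>N. M * \<gamma> i j)"
    by (intro sum_mono mult_right_mono) (use assms(3) nonneg in auto)
  also have "\<dots> = M * (\<Sum>i\<in>N. \<mu> i)" by (simp add: sum_distrib_left[symmetric] rows)
  finally show ?thesis using assms(2) by simp
qed

lemma wasserstein_diff_le:
  assumes "\<And>i j. 0 \<le> \<delta> i j" "coupling N \<mu> \<nu> \<pi>" "(\<Sum>i\<in>N. \<mu> i) = 1"
    and "transport_cost N \<delta>' \<pi> = wasserstein N \<delta>' \<mu> \<nu>"
    and "\<And>i j. i \<in> N \<Longrightarrow> j \<in> N \<Longrightarrow> \<delta> i j - \<delta>' i j \<le> M"
  shows "wasserstein N \<delta> \<mu> \<nu> - wasserstein N \<delta>' \<mu> \<nu> \<le> M"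
  using wasserstein_le_transport_cost[where \<delta> = \<delta>, OF assms(1,2)]
    transport_cost_diff_le[where \<delta> = \<delta> and \<delta>' = \<delta>', OF assms(2,3,5)] assms(4)
  by linarith

lemma diff_le_Max_abs_diff:
  fixes f g :: "'a \<Rightarrow> 'a \<Rightarrow> real"
  assumes "finite N" "u \<in> N" "v \<in> N"
  shows "f u v - g u v \<le> Max {\<bar>f u v - g u v\<bar> | u v. u \<in> N \<and> v \<in> N}"
proof -
  have "finite {\<bar>f u v - g u v\<bar> | u v. u \<in> N \<and> v \<in> N}"
    using assms(1) by (intro finite_image_set2) simp_all
  then have "\<bar>f u v - g u v\<bar> \<le> Max {\<bar>f u v - g u v\<bar> | u v. u \<in> N \<and> v \<in> N}"
    by (rule Max_ge) (use assms(2,3) in blast)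
  then show ?thesis by simp
qed

lemma ricci_diff_le:
  assumes "0 \<le> wasserstein N (hop_dist E) (nbr_measure E w a) (nbr_measure E w b)"
    and "0 < hop_dist E' a b" "hop_dist E' a b \<le> hop_dist E a b"
  shows "ricci N E' w' a b - ricci N E w a b
    \<le> (wasserstein N (hop_dist E) (nbr_measure E w a) (nbr_measure E w b)
       - wasserstein N (hop_dist E') (nbr_measure E' w' a) (nbr_measure E' w' b))
      / hop_dist E' a b"
proof -
  have "wasserstein N (hop_dist E) (nbr_measure E w a) (nbr_measure E w b) / hop_dist E a b
      \<le> wasserstein N (hop_dist E) (nbr_measure E w a) (nbr_measure E w b) / hop_dist E' a b"
    using assms by (intro divide_left_mono) auto
  then show ?thesis unfolding ricci_def by (simp add: diff_divide_distrib)
qed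

theorem proposition1:
  fixes N :: "'a set" and E :: "('a \<times> 'a) set" and w :: "'a \<Rightarrow> 'a \<Rightarrow> real"
    and x y a b :: 'a and wxy :: real
  assumes G: "wgraph N E w" and conn: "connected_graph N E"
    and xy: "x \<in> N" "y \<in> N" "x \<noteq> y" "(x, y) \<notin> E" and wxy: "wxy > 0"
    and ab: "a \<in> N" "b \<in> N" "a \<noteq> b"
  defines "Es \<equiv> E \<union> {(x, y), (y, x)}"
    and "ws \<equiv> (\<lambda>u v. if (u = x \<and> v = y) \<or> (u = y \<and> v = x) then wxy else w u v)"
  shows "ricci N Es ws a b - ricci N E w a b
           \<le> (wasserstein N (hop_dist E) (nbr_measure E w a) (nbr_measure E w b)
              - wasserstein N (hop_dist Es) (nbr_measure Es ws a) (nbr_measure Es ws b))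
             / hop_dist Es a b
         \<and> (a \<notin> {x, y} \<longrightarrow> b \<notin> {x, y} \<longrightarrow>
         (\<exists>\<pi>. coupling N (nbr_measure Es ws a) (nbr_measure Es ws b) \<pi> \<and>
              transport_cost N (hop_dist Es) \<pi>
                = wasserstein N (hop_dist Es) (nbr_measure Es ws a) (nbr_measure Es ws b)) \<longrightarrow>
         ricci N Es ws a b - ricci N E w a b
           \<le> Max {\<bar>hop_dist E u v - hop_dist Es u v\<bar> | u v. u \<in> N \<and> v \<in> N} / hop_dist Es a b)"
proof -
  have E_sub: "E \<subseteq> Es" unfolding Es_def by blast
  note ds_pos = hop_dist_supergraph_pos[OF conn E_sub ab]
  have "nbrs E a \<noteq> {}" "nbrs E b \<noteq> {}"
    using connected_nbrs_nonempty[OF conn] ab by metis+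
  note \<mu>a = nbr_measure_nonneg[OF G this(1)] sum_nbr_measure[OF G this(1)]
    and \<mu>b = nbr_measure_nonneg[OF G this(2)] sum_nbr_measure[OF G this(2)]
  define W where "W = wasserstein N (hop_dist E) (nbr_measure E w a) (nbr_measure E w b)"
  define Ws where "Ws = wasserstein N (hop_dist Es) (nbr_measure Es ws a) (nbr_measure Es ws b)"
  define M where "M = Max {\<bar>hop_dist E u v - hop_dist Es u v\<bar> | u v. u \<in> N \<and> v \<in> N}"
  have curv: "ricci N Es ws a b - ricci N E w a b \<le> (W - Ws) / hop_dist Es a b"
    unfolding W_def Ws_def
    by (rule ricci_diff_le[OF wasserstein_nonneg[OF hop_dist_nonneg product_coupling[OF \<mu>a \<mu>b]]
          ds_pos hop_dist_supergraph_le[OF conn E_sub ab]])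
  show ?thesis
    unfolding W_def[symmetric] Ws_def[symmetric] M_def[symmetric]
  proof (intro conjI impI)
    show "ricci N Es ws a b - ricci N E w a b \<le> (W - Ws) / hop_dist Es a b" by (fact curv)
  next
    have "nbr_measure Es ws u = nbr_measure E w u" if "u \<notin> {x, y}" for u
      using nbr_measure_add_edge_non_endpoint[OF that] unfolding Es_def ws_def .
    moreover assume "a \<notin> {x, y}" "b \<notin> {x, y}"
    ultimately have same: "nbr_measure Es ws a = nbr_measure E w a" "nbr_measure Es ws b = nbr_measure E w b"
      by blast+
    assume "\<exists>\<pi>. coupling N (nbr_measure Es ws a) (nbr_measure Es ws b) \<pi> \<and>
      transport_cost N (hop_dist Es) \<pi> = Ws"
    then obtain \<pi> where \<pi>: "coupling N (nbr_measure E w a) (nbr_measure E w b) \<pi>"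
      and opt: "transport_cost N (hop_dist Es) \<pi> = wasserstein N (hop_dist Es) (nbr_measure E w a) (nbr_measure E w b)"
      unfolding Ws_def same by blast
    have "finite N" using G unfolding wgraph_def by blast
    have "W - Ws \<le> M"
      unfolding W_def Ws_def M_def same
      by (rule wasserstein_diff_le[where \<delta> = "hop_dist E" and \<delta>' = "hop_dist Es",
            OF hop_dist_nonneg \<pi> \<mu>a(2) opt])
        (rule diff_le_Max_abs_diff[where f = "hop_dist E" and g = "hop_dist Es", OF \<open>finite N\<close>])
    then have "(W - Ws) / hop_dist Es a b \<le> M / hop_dist Es a b"
      using ds_pos by (simp add: divide_right_mono)
    with curv show "ricci N Es ws a b - ricci N E w a b \<le> M / hop_dist Es a b" by linarith
  qed
qed

end
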